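(* Let $r\le n-1$ and let $P=P(m_1,\dots,m_{n-1})$ be a natural unit interval order with $m_1=\cdots=m_{r-1}=r$ and $m_r=\cdots=m_{n-1}=n$, and let $G=\mathrm{inc}(P)$. Then $$X_G(\mathbf{x},t)=\sum_{\ell=0}^{\min\{n-r,r-1\}}t^\ell\,[n-r]_t!\,[r-1]_t!\,[n-2\ell]_t\,e_{(n-\ell,\ell)}.$$
   Context: A natural unit interval order $P(m_1,\dots,m_{n-1})$ is defined for integers $m_1\le\cdots\le m_{n-1}\le n$ with $m_i\ge i$: it is the poset on $[n]$ with $i<_P j$ iff $i<n$ and $j\in\{m_i+1,\dots,n\}$. Its incomparability graph has vertex set $[n]$ and an edge $\{i,j\}$ ($i<j$) iff $j\le m_i$. The chromatic quasisymmetric function of a graph $G$ on $V\subset\mathbb{P}$ is $X_G(\mathbf{x},t)=\sum_\kappa t^{\mathrm{asc}(\kappa)}\prod_v x_{\kappa(v)}$ over proper colorings $\kappa:V\to\mathbb{P}$, with $\mathrm{asc}(\kappa)$ the number of edges $\{i,j\}$, $i<j$, with $\kappa(i)<\kappa(j)$. $[m]_t=1+t+\cdots+t^{m-1}$, $[m]_t!=[1]_t\cdots[m]_t$, $[0]_t!=1$; $e_{(n,0)}=e_n$ and $e_\lambda$ denotes elementary symmetric functions. *)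

theory Defs
  imports Main "HOL-Computational_Algebra.Polynomial"
begin

text \<open>Incomparability graph of the natural unit interval order P(m_1,...,m_{n-1}) on [n]:
  edge {i,j} with i<j iff j <= m_i (only i < n have an m_i).\<close>
definition nuio_edge :: "nat \<Rightarrow> (nat \<Rightarrow> nat) \<Rightarrow> nat \<Rightarrow> nat \<Rightarrow> bool" where
  "nuio_edge n m i j \<longleftrightarrow> 1 \<le> i \<and> i < j \<and> j \<le> n \<and> i < n \<and> j \<le> m i"

text \<open>Proper colorings kappa : [n] -> positive integers (extended by 0 outside [n])
  whose monomial prod_v x_{kappa v} equals x^alpha.\<close>
definition colorings_of_type :: "nat \<Rightarrow> (nat \<Rightarrow> nat) \<Rightarrow> (nat \<Rightarrow> nat) \<Rightarrow> (nat \<Rightarrow> nat) set" where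
  "colorings_of_type n m alpha = {\<kappa>.
      (\<forall>v. v \<in> {1..n} \<longrightarrow> 1 \<le> \<kappa> v) \<and> (\<forall>v. v \<notin> {1..n} \<longrightarrow> \<kappa> v = 0) \<and>
      (\<forall>i j. nuio_edge n m i j \<longrightarrow> \<kappa> i \<noteq> \<kappa> j) \<and>
      (\<forall>c. 1 \<le> c \<longrightarrow> card {v \<in> {1..n}. \<kappa> v = c} = alpha c)}"

definition asc :: "nat \<Rightarrow> (nat \<Rightarrow> nat) \<Rightarrow> (nat \<Rightarrow> nat) \<Rightarrow> nat" where
  "asc n m \<kappa> = card {(i, j). nuio_edge n m i j \<and> \<kappa> i < \<kappa> j}"

text \<open>Coefficient of x^alpha in the chromatic quasisymmetric function X_G(x,t),
  a polynomial in t.\<close>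
definition csf_coeff :: "nat \<Rightarrow> (nat \<Rightarrow> nat) \<Rightarrow> (nat \<Rightarrow> nat) \<Rightarrow> int poly" where
  "csf_coeff n m alpha = (\<Sum>\<kappa> \<in> colorings_of_type n m alpha. monom 1 (asc n m \<kappa>))"

text \<open>Coefficient of x^alpha in e_lambda = e_{lambda_1} e_{lambda_2} ...: number of
  tuples of finite sets S_k of positive integers with |S_k| = lambda_k such that each
  c >= 1 lies in exactly alpha c of them.\<close>
definition e_coeff :: "nat list \<Rightarrow> (nat \<Rightarrow> nat) \<Rightarrow> nat" where
  "e_coeff lam alpha = card {Ss :: nat set list. length Ss = length lam \<and>
      (\<forall>k < length lam. finite (Ss ! k) \<and> Ss ! k \<subseteq> {1..} \<and> card (Ss ! k) = lam ! k) \<and>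
      (\<forall>c. 1 \<le> c \<longrightarrow> length (filter (\<lambda>S. c \<in> S) Ss) = alpha c)}"

definition qint :: "nat \<Rightarrow> int poly" where
  "qint k = (\<Sum>i<k. monom 1 i)"

definition qfact :: "nat \<Rightarrow> int poly" where
  "qfact k = (\<Prod>i = 1..k. qint i)"

end

theory Submission
  imports Defs
begin

text \<open>
  The incomparability graph is the union of the cliques {1..r} and {r..n}, which share the
  vertex r. A proper colouring is therefore a colour c of r together with injective colourings
  of the private parts {1..<r} and {r<..n} avoiding c, and its ascents are the ascents inside
  the two cliques. Summing over the orderings of fixed colour sets U and V of the private parts
  contributes [r-1]! [n-r]! t^(#{u in U. u < c} + #{v in V. c < v}).

  For a content alpha, the colours used twice (the doubles D) lie in both U and V, while the
  singles Q are distributed as c, a set A of size r - 1 - |D| in U, and the rest in V. The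
  generating function of the pairs (c, A) depends only on |Q|; removing the largest single gives
  a Pascal-type recursion which identifies it with the sum over j of t^j [|Q|-2j] (|Q| choose j).
  On the other side the coefficient of x^alpha in e_(n-l, l) is (|Q| choose l - |D|), and the
  two sums agree term by term after the shift l = |D| + j.
\<close>

lemma qint_Suc: "qint (Suc k) = qint k + monom 1 k"
  unfolding qint_def by simp

lemma qint_0 [simp]: "qint 0 = 0"
  unfolding qint_def by simp

lemma qint_Suc_left: "qint (Suc k) = 1 + monom 1 1 * qint k"
proof -
  have "qint (Suc k) = monom 1 0 + (\<Sum>i<k. monom 1 (Suc i))"
    unfolding qint_def by (rule sum.lessThan_Suc_shift)
  also have "(\<Sum>i<k. monom 1 (Suc i)) = monom 1 1 * qint k"
    unfolding qint_def sum_distrib_left by (simp add: mult_monom)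
  finally show ?thesis by (simp add: one_pCons monom_0)
qed

lemma qfact_Suc: "qfact (Suc k) = qint (Suc k) * qfact k"
  unfolding qfact_def by simp

definition qbinom_partial :: "nat \<Rightarrow> nat \<Rightarrow> int poly" where
  "qbinom_partial q k = (\<Sum>j<k. monom 1 j * qint (q - 2 * j) * of_nat (q choose j))"

definition marked_poly :: "nat \<Rightarrow> nat \<Rightarrow> int poly" where
  "marked_poly q a = (if a < q then qbinom_partial q (min a (q - 1 - a) + 1) else 0)"

lemma qbinom_partial_0 [simp]: "qbinom_partial q 0 = 0"
  unfolding qbinom_partial_def by simp

lemma qbinom_partial_Suc:
  "qbinom_partial q (Suc k) = qbinom_partial q k + monom 1 k * qint (q - 2 * k) * of_nat (q choose k)"
  unfolding qbinom_partial_def by simp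

lemma qbinom_partial_Suc_Suc:
  assumes "2 * k \<le> p"
  shows "qbinom_partial (Suc p) (Suc k)
    = monom 1 k * of_nat (p choose k) + qbinom_partial p k + monom 1 1 * qbinom_partial p (Suc k)"
  using assms
proof (induction k)
  case 0
  then show ?case by (simp add: qbinom_partial_Suc qint_Suc_left monom_0 one_pCons)
next
  case (Suc k)
  then have p: "2 * k + 2 \<le> p" by simp
  define X where "X = qint (p - 2 * k - 2)"
  have qint_p2k1: "qint (p - 2 * k - 1) = 1 + monom 1 1 * X"
    unfolding X_def using qint_Suc_left[of "p - 2 * k - 2"] p by (simp add: Suc_diff_Suc numeral_2_eq_2)
  have qint_p2k: "qint (p - 2 * k) = 1 + monom 1 1 * qint (p - 2 * k - 1)"
    using qint_Suc_left[of "p - 2 * k - 1"] p by (simp add: Suc_diff_Suc)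
  have shift: "monom 1 (Suc k) = monom 1 1 * (monom 1 k :: int poly)"
    by (simp add: mult_monom)
  have diff: "Suc p - 2 * Suc k = p - 2 * k - 1" "p - 2 * Suc k = p - 2 * k - 2" by simp_all
  show ?case
    using Suc.IH Suc.prems
    unfolding qbinom_partial_Suc[of "Suc p" "Suc k"] qbinom_partial_Suc[of p "Suc k"] qbinom_partial_Suc[of p k]
      diff qint_p2k qint_p2k1 X_def[symmetric] shift binomial_Suc_Suc
    by (simp add: algebra_simps)
qed

lemma marked_poly_Suc_interior:
  assumes "0 < a" "0 < b" "p = a + b"
  shows "marked_poly (Suc p) a
    = monom 1 a * of_nat (p choose a) + marked_poly p (a - 1) + monom 1 1 * marked_poly p a"
proof -
  define k where "k = min a b"
  have lhs: "marked_poly (Suc p) a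
      = monom 1 k * of_nat (p choose k) + qbinom_partial p k + monom 1 1 * qbinom_partial p (Suc k)"
    unfolding marked_poly_def k_def using assms by (simp add: qbinom_partial_Suc_Suc)
  consider "a < b" | "a = b" | "b < a" by linarith
  then show ?thesis
  proof cases
    case 1
    have "marked_poly p (a - 1) = qbinom_partial p a" "marked_poly p a = qbinom_partial p (Suc a)"
      unfolding marked_poly_def using 1 assms by simp_all
    then show ?thesis unfolding lhs k_def using 1 by simp
  next
    case 2
    have "marked_poly p (a - 1) = qbinom_partial p a" "marked_poly p a = qbinom_partial p (Suc a)"
      unfolding marked_poly_def using 2 assms by (simp_all add: qbinom_partial_Suc)
    then show ?thesis unfolding lhs k_def using 2 by simp
  next
    case 3
    have choose_sym: "p choose a = p choose b"
      using assms binomial_symmetric[of b p] by simp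
    have gap: "p - 2 * b = a - b" "p - b * 2 = a - b" using assms by simp_all
    have "monom 1 b + monom 1 1 * (monom 1 b * qint (a - b))
        = monom 1 b * (1 + monom 1 1 * qint (a - b))"
      by (simp add: algebra_simps)
    also have "\<dots> = monom 1 b * (qint (a - b) + monom 1 (a - b))"
      by (simp only: qint_Suc_left[symmetric] qint_Suc)
    also have "\<dots> = monom 1 a + monom 1 b * qint (a - b)"
      using 3 by (simp add: algebra_simps mult_monom)
    finally have key: "monom 1 b + monom 1 1 * (monom 1 b * qint (a - b))
        = monom 1 a + (monom 1 b * qint (a - b) :: int poly)" .
    have "marked_poly (Suc p) a
        = (monom 1 b + monom 1 1 * (monom 1 b * qint (a - b))) * of_nat (p choose b)
          + qbinom_partial p b + monom 1 1 * qbinom_partial p b"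
      unfolding lhs k_def using 3 by (simp add: qbinom_partial_Suc gap algebra_simps)
    also have "\<dots> = monom 1 a * of_nat (p choose a) + qbinom_partial p (Suc b)
        + monom 1 1 * qbinom_partial p b"
      unfolding key by (simp add: qbinom_partial_Suc gap choose_sym algebra_simps)
    finally show ?thesis
      unfolding marked_poly_def using 3 assms by simp
  qed
qed

lemma marked_poly_Suc:
  "marked_poly (Suc p) a = monom 1 a * of_nat (p choose a)
    + (if a = 0 then 0 else marked_poly p (a - 1)) + monom 1 1 * marked_poly p a"
proof -
  consider "p < a" | "a = 0" | "0 < a" "a = p" | "0 < a" "a < p" by linarith
  then show ?thesis
  proof cases
    case 1
    then show ?thesis unfolding marked_poly_def by simp
  next
    case 2
    then show ?thesis
      by (cases p) (simp_all add: marked_poly_def qbinom_partial_def monom_0 one_pCons qint_Suc_left)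
  next
    case 3
    then show ?thesis by (simp add: marked_poly_def qbinom_partial_def monom_0 qint_Suc add.commute)
  next
    case 4
    then show ?thesis using marked_poly_Suc_interior[of a "p - a" p] by simp
  qed
qed

lemma sum_card_subsets_insert:
  assumes "finite S" "x \<notin> S"
  shows "(\<Sum>A\<in>{A. A \<subseteq> insert x S \<and> card A = k}. f A)
    = (\<Sum>A\<in>{A. A \<subseteq> S \<and> card A = k}. f A)
      + (if k = 0 then 0 else \<Sum>B\<in>{B. B \<subseteq> S \<and> card B = k - 1}. f (insert x B))"
proof (cases k)
  case 0
  have "{A. A \<subseteq> insert x S \<and> card A = k} = {A. A \<subseteq> S \<and> card A = k}"
    using 0 assms by (auto simp: card_eq_0_iff dest: finite_subset)
  then show ?thesis using 0 by simp
next
  case (Suc j)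
  have split: "{A. A \<subseteq> insert x S \<and> card A = k}
      = {A. A \<subseteq> S \<and> card A = k} \<union> insert x ` {B. B \<subseteq> S \<and> card B = j}"
  proof (intro equalityI subsetI)
    fix A assume A: "A \<in> {A. A \<subseteq> insert x S \<and> card A = k}"
    show "A \<in> {A. A \<subseteq> S \<and> card A = k} \<union> insert x ` {B. B \<subseteq> S \<and> card B = j}"
    proof (cases "x \<in> A")
      case True
      then have "A = insert x (A - {x})" "A - {x} \<subseteq> S" "card (A - {x}) = j"
        using A Suc by auto
      then show ?thesis by blast
    qed (use A in auto)
  next
    fix A assume "A \<in> {A. A \<subseteq> S \<and> card A = k} \<union> insert x ` {B. B \<subseteq> S \<and> card B = j}"
    then consider "A \<subseteq> S" "card A = k" | B where "A = insert x B" "B \<subseteq> S" "card B = j"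
      by blast
    then show "A \<in> {A. A \<subseteq> insert x S \<and> card A = k}"
    proof cases
      case 2
      then have "finite B" "x \<notin> B" using assms finite_subset by blast+
      then show ?thesis using 2 Suc by auto
    qed auto
  qed
  have inj: "inj_on (insert x) {B. B \<subseteq> S \<and> card B = j}"
    using assms by (auto simp: inj_on_def)
  have "(\<Sum>A\<in>{A. A \<subseteq> insert x S \<and> card A = k}. f A)
      = (\<Sum>A\<in>{A. A \<subseteq> S \<and> card A = k}. f A) + (\<Sum>A\<in>insert x ` {B. B \<subseteq> S \<and> card B = j}. f A)"
    unfolding split using assms by (intro sum.union_disjoint) auto
  also have "(\<Sum>A\<in>insert x ` {B. B \<subseteq> S \<and> card B = j}. f A) = (\<Sum>B\<in>{B. B \<subseteq> S \<and> card B = j}. f (insert x B))"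
    by (rule sum.reindex[OF inj, unfolded comp_def])
  finally show ?thesis using Suc by simp
qed

text \<open>A pair (c, A) encodes the colour c of the shared vertex and the singles A used on the
  left clique; marked_stat counts the ascents through the shared vertex.\<close>
definition marked_stat :: "nat set \<Rightarrow> nat \<Rightarrow> nat set \<Rightarrow> nat" where
  "marked_stat Q c A = card {x \<in> A. x < c} + card {y \<in> Q - {c} - A. c < y}"

definition marked_gf :: "nat set \<Rightarrow> nat \<Rightarrow> int poly" where
  "marked_gf Q a = (\<Sum>c\<in>Q. \<Sum>A\<in>{A. A \<subseteq> Q - {c} \<and> card A = a}. monom 1 (marked_stat Q c A))"

lemma marked_stat_insert_top:
  assumes "\<forall>x\<in>Q. x < M"
  shows "A \<subseteq> Q \<Longrightarrow> marked_stat (insert M Q) M A = card A"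
    and "c \<in> Q \<Longrightarrow> A \<subseteq> Q - {c} \<Longrightarrow> finite Q \<Longrightarrow>
      marked_stat (insert M Q) c A = Suc (marked_stat Q c A)"
    and "c \<in> Q \<Longrightarrow> marked_stat (insert M Q) c (insert M A) = marked_stat Q c A"
proof -
  assume "A \<subseteq> Q"
  then have "{x \<in> A. x < M} = A" and "{y \<in> insert M Q - {M} - A. M < y} = {}"
    using assms by auto
  then show "marked_stat (insert M Q) M A = card A" unfolding marked_stat_def by (simp only:) simp
next
  assume c: "c \<in> Q" and A: "A \<subseteq> Q - {c}" and fin: "finite Q"
  have "M \<notin> Q" using assms by blast
  then have "{y \<in> insert M Q - {c} - A. c < y} = insert M {y \<in> Q - {c} - A. c < y}"
    using A c assms by auto
  then show "marked_stat (insert M Q) c A = Suc (marked_stat Q c A)"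
    unfolding marked_stat_def using fin \<open>M \<notin> Q\<close> by simp
next
  assume c: "c \<in> Q"
  have "{x \<in> insert M A. x < c} = {x \<in> A. x < c}" "insert M Q - {c} - insert M A = Q - {c} - A"
    using c assms by auto
  then show "marked_stat (insert M Q) c (insert M A) = marked_stat Q c A"
    unfolding marked_stat_def by simp
qed

lemma marked_gf_insert_top:
  assumes fin: "finite Q" and top: "\<forall>x\<in>Q. x < M"
  shows "marked_gf (insert M Q) a = monom 1 a * of_nat (card Q choose a)
    + (if a = 0 then 0 else marked_gf Q (a - 1)) + monom 1 1 * marked_gf Q a"
proof -
  have M: "M \<notin> Q" using top by blast
  have "(\<Sum>A\<in>{A. A \<subseteq> Q \<and> card A = a}. monom 1 (marked_stat (insert M Q) M A))
      = (\<Sum>A\<in>{A. A \<subseteq> Q \<and> card A = a}. monom 1 a :: int poly)"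
    by (intro sum.cong) (auto simp: marked_stat_insert_top(1)[OF top])
  then have top_term: "(\<Sum>A\<in>{A. A \<subseteq> Q \<and> card A = a}. monom 1 (marked_stat (insert M Q) M A))
      = monom 1 a * (of_nat (card Q choose a) :: int poly)"
    using n_subsets[OF fin, of a] by (simp add: mult.commute)
  have other_term: "(\<Sum>A\<in>{A. A \<subseteq> insert M Q - {c} \<and> card A = a}. monom 1 (marked_stat (insert M Q) c A) :: int poly)
      = monom 1 1 * (\<Sum>A\<in>{A. A \<subseteq> Q - {c} \<and> card A = a}. monom 1 (marked_stat Q c A))
        + (if a = 0 then 0 else \<Sum>A\<in>{A. A \<subseteq> Q - {c} \<and> card A = a - 1}. monom 1 (marked_stat Q c A))"
    if c: "c \<in> Q" for c
  proof -
    have eq: "insert M Q - {c} = insert M (Q - {c})" using c M by auto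
    have "(\<Sum>A\<in>{A. A \<subseteq> insert M Q - {c} \<and> card A = a}. monom 1 (marked_stat (insert M Q) c A) :: int poly)
        = (\<Sum>A\<in>{A. A \<subseteq> Q - {c} \<and> card A = a}. monom 1 (marked_stat (insert M Q) c A))
          + (if a = 0 then 0 else
             \<Sum>A\<in>{A. A \<subseteq> Q - {c} \<and> card A = a - 1}. monom 1 (marked_stat (insert M Q) c (insert M A)))"
      unfolding eq by (rule sum_card_subsets_insert) (use fin M in auto)
    also have "(\<Sum>A\<in>{A. A \<subseteq> Q - {c} \<and> card A = a}. monom 1 (marked_stat (insert M Q) c A) :: int poly)
        = (\<Sum>A\<in>{A. A \<subseteq> Q - {c} \<and> card A = a}. monom 1 1 * monom 1 (marked_stat Q c A))"
      using marked_stat_insert_top(2)[OF top c _ fin] by (intro sum.cong) (simp_all add: mult_monom)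
    also have "(\<Sum>A\<in>{A. A \<subseteq> Q - {c} \<and> card A = a - 1}. monom 1 (marked_stat (insert M Q) c (insert M A)))
        = (\<Sum>A\<in>{A. A \<subseteq> Q - {c} \<and> card A = a - 1}. monom 1 (marked_stat Q c A) :: int poly)"
      by (simp add: marked_stat_insert_top(3)[OF top c])
    finally show ?thesis by (simp only: sum_distrib_left)
  qed
  show ?thesis
    unfolding marked_gf_def using fin M
    by (simp add: top_term other_term sum.distrib sum_distrib_left)
qed

theorem marked_gf_eq_marked_poly:
  "finite Q \<Longrightarrow> marked_gf Q a = marked_poly (card Q) a"
proof (induction Q arbitrary: a rule: finite_linorder_max_induct)
  case empty
  then show ?case by (simp add: marked_gf_def marked_poly_def)
next
  case (insert M Q)
  then have "M \<notin> Q" by blast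
  then show ?case
    using insert by (simp add: marked_gf_insert_top marked_poly_Suc)
qed

lemma sum_monom_card_greater:
  fixes U :: "'a::linorder set"
  shows "finite U \<Longrightarrow> (\<Sum>x\<in>U. monom 1 (card {y \<in> U. x < y})) = qint (card U)"
proof (induction U rule: finite_linorder_max_induct)
  case empty
  then show ?case by simp
next
  case (insert M U)
  have "M \<notin> U" using insert.hyps(2) by blast
  have top: "card {y \<in> insert M U. M < y} = 0"
    using insert.hyps(2) by (auto simp: card_eq_0_iff)
  have rest: "card {y \<in> insert M U. x < y} = Suc (card {y \<in> U. x < y})" if "x \<in> U" for x
  proof -
    have "{y \<in> insert M U. x < y} = insert M {y \<in> U. x < y}"
      using that insert.hyps(2) by auto
    then show ?thesis using insert.hyps(1) \<open>M \<notin> U\<close> by simp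
  qed
  have "(\<Sum>x\<in>insert M U. monom 1 (card {y \<in> insert M U. x < y}))
      = monom 1 0 + (\<Sum>x\<in>U. monom 1 1 * monom 1 (card {y \<in> U. x < y}) :: int poly)"
    unfolding sum.insert[OF insert.hyps(1) \<open>M \<notin> U\<close>] top
    by (intro arg_cong2[where f = "(+)"] refl sum.cong) (simp_all only: rest mult_monom mult_1 plus_1_eq_Suc)
  then have "(\<Sum>x\<in>insert M U. monom 1 (card {y \<in> insert M U. x < y}))
      = 1 + monom 1 1 * (\<Sum>x\<in>U. monom 1 (card {y \<in> U. x < y}) :: int poly)"
    by (simp add: sum_distrib_left monom_0 one_pCons)
  then show ?case
    using insert.IH insert.hyps(1) \<open>M \<notin> U\<close> by (simp add: qint_Suc_left)
qed

definition asc_between :: "(nat \<Rightarrow> nat) \<Rightarrow> nat \<Rightarrow> nat \<Rightarrow> nat" where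
  "asc_between f lo hi = card {(i, j). lo \<le> i \<and> i < j \<and> j < hi \<and> f i < f j}"

text \<open>Arrangements are extended by 0 outside their interval, so that the colourings of the
  two cliques can be glued by addition.\<close>
definition arrangements :: "nat \<Rightarrow> nat \<Rightarrow> nat set \<Rightarrow> (nat \<Rightarrow> nat) set" where
  "arrangements lo k U = {f. bij_betw f {lo..<lo + k} U \<and> (\<forall>x. x \<notin> {lo..<lo + k} \<longrightarrow> f x = 0)}"

lemma asc_between_split_first:
  assumes "lo < hi"
  shows "asc_between f lo hi = card {j. lo < j \<and> j < hi \<and> f lo < f j} + asc_between f (Suc lo) hi"
proof -
  have e: "{(i, j). lo \<le> i \<and> i < j \<and> j < hi \<and> f i < f j} =
     (\<lambda>j. (lo, j)) ` {j. lo < j \<and> j < hi \<and> f lo < f j} \<union> {(i, j). Suc lo \<le> i \<and> i < j \<and> j < hi \<and> f i < f j}"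
    by (auto simp: le_eq_less_or_eq Suc_le_eq)
  have f1: "finite ((\<lambda>j. (lo, j)) ` {j. lo < j \<and> j < hi \<and> f lo < f j})" by simp
  have f2: "finite {(i, j). Suc lo \<le> i \<and> i < j \<and> j < hi \<and> f i < f j}"
    by (rule finite_subset[of _ "{..<hi} \<times> {..<hi}"]) auto
  have d: "(\<lambda>j. (lo, j)) ` {j. lo < j \<and> j < hi \<and> f lo < f j} \<inter> {(i, j). Suc lo \<le> i \<and> i < j \<and> j < hi \<and> f i < f j} = {}"
    by auto
  show ?thesis unfolding asc_between_def e card_Un_disjoint[OF f1 f2 d]
    by (simp add: card_image inj_on_def)
qed

lemma asc_between_fun_upd: "lo < lo' \<Longrightarrow> asc_between (g(lo := x)) lo' hi = asc_between g lo' hi"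
  unfolding asc_between_def by (rule arg_cong[where f=card]) auto

lemma asc_between_split_last:
  "asc_between f lo (Suc h) = asc_between f lo h + card {i. lo \<le> i \<and> i < h \<and> f i < f h}"
proof -
  have e: "{(i, j). lo \<le> i \<and> i < j \<and> j < Suc h \<and> f i < f j} =
     {(i, j). lo \<le> i \<and> i < j \<and> j < h \<and> f i < f j} \<union> (\<lambda>i. (i, h)) ` {i. lo \<le> i \<and> i < h \<and> f i < f h}"
    by (auto simp: less_Suc_eq)
  have f1: "finite {(i, j). lo \<le> i \<and> i < j \<and> j < h \<and> f i < f j}"
    by (rule finite_subset[of _ "{..<h} \<times> {..<h}"]) auto
  have f2: "finite ((\<lambda>i. (i, h)) ` {i. lo \<le> i \<and> i < h \<and> f i < f h})" by simp
  have d: "{(i, j). lo \<le> i \<and> i < j \<and> j < h \<and> f i < f j} \<inter> (\<lambda>i. (i, h)) ` {i. lo \<le> i \<and> i < h \<and> f i < f h} = {}"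
    by auto
  show ?thesis unfolding asc_between_def e card_Un_disjoint[OF f1 f2 d]
    by (simp add: card_image inj_on_def)
qed

lemma asc_between_cong: "(\<And>v. lo \<le> v \<Longrightarrow> v < hi \<Longrightarrow> f v = f' v) \<Longrightarrow> asc_between f lo hi = asc_between f' lo hi"
  unfolding asc_between_def by (rule arg_cong[where f=card]) auto

lemma arrangements_0: "arrangements lo 0 {} = {\<lambda>_. 0}"
  unfolding arrangements_def by (auto simp: bij_betw_def)

lemma fun_upd_in_arrangements:
  assumes x: "x \<in> U" and g: "g \<in> arrangements (Suc lo) k (U - {x})"
  shows "g(lo := x) \<in> arrangements lo (Suc k) U"
proof -
  have bij: "bij_betw g {Suc lo..<Suc lo + k} (U - {x})"
    and zero: "\<And>y. y \<notin> {Suc lo..<Suc lo + k} \<Longrightarrow> g y = 0"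
    using g unfolding arrangements_def by auto
  have "bij_betw (g(lo := x)) {Suc lo..<Suc lo + k} (U - {x})"
    using bij by (rule bij_betw_cong[THEN iffD1, rotated]) simp
  then have "bij_betw (g(lo := x)) ({Suc lo..<Suc lo + k} \<union> {lo}) ((U - {x}) \<union> {(g(lo := x)) lo})"
    by (rule notIn_Un_bij_betw[rotated 2]) auto
  moreover have "{Suc lo..<Suc lo + k} \<union> {lo} = {lo..<lo + Suc k}" "(U - {x}) \<union> {(g(lo := x)) lo} = U"
    using x by auto
  ultimately show ?thesis unfolding arrangements_def using zero by auto
qed

lemma arrangements_Suc:
  "arrangements lo (Suc k) U = (\<lambda>(x, g). g(lo := x)) ` (SIGMA x:U. arrangements (Suc lo) k (U - {x}))"
proof
  show "arrangements lo (Suc k) U \<subseteq> (\<lambda>(x, g). g(lo := x)) ` (SIGMA x:U. arrangements (Suc lo) k (U - {x}))"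
  proof
    fix f assume "f \<in> arrangements lo (Suc k) U"
    then have bij: "bij_betw f {lo..<lo + Suc k} U" and zero: "\<And>y. y \<notin> {lo..<lo + Suc k} \<Longrightarrow> f y = 0"
      unfolding arrangements_def by auto
    have flo: "f lo \<in> U" using bij unfolding bij_betw_def by auto
    have "bij_betw f ({lo..<lo + Suc k} - {lo}) (U - {f lo})"
      by (rule bij_betw_DiffI[OF bij]) (auto simp: bij_betw_def flo)
    moreover have "{lo..<lo + Suc k} - {lo} = {Suc lo..<Suc lo + k}" by auto
    ultimately have "bij_betw f {Suc lo..<Suc lo + k} (U - {f lo})" by simp
    then have "bij_betw (f(lo := 0)) {Suc lo..<Suc lo + k} (U - {f lo})"
      by (rule bij_betw_cong[THEN iffD1, rotated]) simp
    then have "f(lo := 0) \<in> arrangements (Suc lo) k (U - {f lo})"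
      unfolding arrangements_def using zero by auto
    moreover have "f = (f(lo := 0))(lo := f lo)" by simp
    ultimately show "f \<in> (\<lambda>(x, g). g(lo := x)) ` (SIGMA x:U. arrangements (Suc lo) k (U - {x}))"
      using flo by (intro rev_image_eqI[of "(f lo, f(lo := 0))"]) auto
  qed
  show "(\<lambda>(x, g). g(lo := x)) ` (SIGMA x:U. arrangements (Suc lo) k (U - {x})) \<subseteq> arrangements lo (Suc k) U"
    by (auto intro: fun_upd_in_arrangements)
qed

lemma arrangements_Suc_inj: "inj_on (\<lambda>(x, g). g(lo := x)) (SIGMA x:U. arrangements (Suc lo) k (U - {x}))"
proof (rule inj_onI, clarify)
  fix x g y h
  assume g: "g \<in> arrangements (Suc lo) k (U - {x})" and h: "h \<in> arrangements (Suc lo) k (U - {y})" and e: "g(lo := x) = h(lo := y)"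
  have "x = y" using fun_upd_eqD[OF e] by simp
  moreover have "g lo = 0" "h lo = 0" using g h unfolding arrangements_def by auto
  ultimately show "x = y \<and> g = h" using e by (metis fun_upd_triv fun_upd_upd)
qed

lemma finite_arrangements: "finite U \<Longrightarrow> finite (arrangements lo k U)"
  by (rule finite_subset[OF _ finite_set_of_finite_funs[of "{lo..<lo + k}" U 0]])
    (auto simp: arrangements_def bij_betw_def)

lemma bij_betw_card_filter:
  "bij_betw f A B \<Longrightarrow> card {i \<in> A. P (f i)} = card {x \<in> B. P x}"
proof -
  assume b: "bij_betw f A B"
  have "card {i \<in> A. P (f i)} = card (f ` {i \<in> A. P (f i)})"
    by (rule card_image[symmetric]) (use b in \<open>auto simp: bij_betw_def inj_on_def\<close>)
  moreover have "f ` {i \<in> A. P (f i)} = {x \<in> B. P x}" using b unfolding bij_betw_def by auto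
  ultimately show ?thesis by simp
qed

lemma asc_between_fun_upd_bij:
  assumes "bij_betw g {Suc lo..<hi} V" "lo < hi"
  shows "asc_between (g(lo := x)) lo hi = card {y \<in> V. x < y} + asc_between g (Suc lo) hi"
proof -
  have "{j. lo < j \<and> j < hi \<and> (g(lo := x)) lo < (g(lo := x)) j} = {j \<in> {Suc lo..<hi}. x < g j}"
    by auto
  then show ?thesis
    using asc_between_split_first[OF assms(2), of "g(lo := x)"] asc_between_fun_upd[of lo "Suc lo" g x hi]
      bij_betw_card_filter[OF assms(1), of "\<lambda>y. x < y"] by simp
qed

theorem sum_arrangements_asc:
  "finite U \<Longrightarrow> card U = k
    \<Longrightarrow> (\<Sum>f\<in>arrangements lo k U. monom 1 (asc_between f lo (lo + k))) = qfact k"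
proof (induction k arbitrary: lo U)
  case 0
  then have "U = {}" by simp
  then show ?case by (simp add: arrangements_0 asc_between_def qfact_def)
next
  case (Suc k)
  let ?A = "\<lambda>x. arrangements (Suc lo) k (U - {x})"
  have asc_upd: "asc_between (g(lo := x)) lo (Suc (lo + k))
      = card {y \<in> U. x < y} + asc_between g (Suc lo) (Suc (lo + k))"
    if "x \<in> U" "g \<in> ?A x" for x g
  proof -
    have "{y \<in> U - {x}. x < y} = {y \<in> U. x < y}" by auto
    then show ?thesis
      using asc_between_fun_upd_bij[of g lo "Suc (lo + k)" "U - {x}" x] that
      unfolding arrangements_def by simp
  qed
  have inner: "(\<Sum>g\<in>?A x. monom 1 (asc_between g (Suc lo) (Suc (lo + k)))) = qfact k" if "x \<in> U" for x
    using Suc.IH[of "U - {x}" "Suc lo"] Suc.prems that by simp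
  have "(\<Sum>f\<in>arrangements lo (Suc k) U. monom 1 (asc_between f lo (lo + Suc k)) :: int poly)
      = (\<Sum>(x, g)\<in>Sigma U ?A. monom 1 (asc_between (g(lo := x)) lo (lo + Suc k)))"
    unfolding arrangements_Suc by (subst sum.reindex[OF arrangements_Suc_inj]) (simp add: case_prod_unfold)
  also have "\<dots> = (\<Sum>x\<in>U. \<Sum>g\<in>?A x. monom 1 (asc_between (g(lo := x)) lo (lo + Suc k)))"
    by (rule sum.Sigma[symmetric]) (use Suc.prems finite_arrangements in auto)
  also have "\<dots> = (\<Sum>x\<in>U. monom 1 (card {y \<in> U. x < y})
      * (\<Sum>g\<in>?A x. monom 1 (asc_between g (Suc lo) (Suc (lo + k)))))"
    by (auto simp: sum_distrib_left mult_monom asc_upd intro!: sum.cong)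
  also have "\<dots> = (\<Sum>x\<in>U. monom 1 (card {y \<in> U. x < y})) * qfact k"
    by (simp add: inner sum_distrib_right cong: sum.cong)
  also have "\<dots> = qfact (Suc k)"
    using Suc.prems by (simp add: sum_monom_card_greater qfact_Suc)
  finally show ?case .
qed

definition doubles :: "(nat \<Rightarrow> nat) \<Rightarrow> nat set" where
  "doubles alpha = {x. alpha x = 2}"

definition singles :: "(nat \<Rightarrow> nat) \<Rightarrow> nat set" where
  "singles alpha = {x. alpha x = 1}"

lemma doubles_singles_disjoint: "doubles alpha \<inter> singles alpha = {}"
  unfolding doubles_def singles_def by auto

lemma finite_doubles_singles:
  assumes "finite {x. alpha x \<noteq> 0}"
  shows "finite (doubles alpha)" "finite (singles alpha)"
  using assms by (auto simp: doubles_def singles_def elim!: finite_subset[rotated])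

lemma zero_notin_doubles_singles:
  assumes "alpha 0 = 0"
  shows "0 \<notin> doubles alpha" "0 \<notin> singles alpha"
  using assms by (simp_all add: doubles_def singles_def)

lemma two_set_content_doubles_singles:
  assumes content: "\<forall>x. alpha x = of_bool (x \<in> S) + of_bool (x \<in> T)"
  shows "\<forall>x. alpha x \<le> 2" and "doubles alpha = S \<inter> T" and "singles alpha = (S - T) \<union> (T - S)"
proof -
  show "\<forall>x. alpha x \<le> 2"
  proof
    fix x show "alpha x \<le> 2" using content[rule_format, of x] by (simp add: of_bool_def)
  qed
  show "doubles alpha = S \<inter> T" "singles alpha = (S - T) \<union> (T - S)"
    unfolding doubles_def singles_def using content by (auto simp: of_bool_def split: if_splits)
qed

lemma two_set_content_split:
  assumes le2: "\<forall>x. alpha x \<le> 2" and J: "J \<subseteq> singles alpha"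
  shows "alpha x = of_bool (x \<in> doubles alpha \<union> J) + of_bool (x \<in> doubles alpha \<union> (singles alpha - J))"
proof -
  have "alpha x = 0 \<or> alpha x = 1 \<or> alpha x = 2" using le2[rule_format, of x] by linarith
  then show ?thesis using J unfolding doubles_def singles_def by auto
qed

lemma card_two_set_split:
  assumes "finite (singles alpha)" "finite (doubles alpha)" "J \<subseteq> singles alpha"
  shows "card (doubles alpha \<union> J) = card (doubles alpha) + card J"
    and "card (doubles alpha \<union> (singles alpha - J)) = card (doubles alpha) + card (singles alpha) - card J"
proof -
  have "finite J" using assms(1,3) finite_subset by blast
  moreover have "doubles alpha \<inter> J = {}" "doubles alpha \<inter> (singles alpha - J) = {}"
    using assms(3) doubles_singles_disjoint by blast+
  moreover have "card (singles alpha - J) = card (singles alpha) - card J"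
    using assms(3) \<open>finite J\<close> by (simp add: card_Diff_subset)
  moreover have "card J \<le> card (singles alpha)" using assms(1,3) by (rule card_mono)
  ultimately show "card (doubles alpha \<union> J) = card (doubles alpha) + card J"
    and "card (doubles alpha \<union> (singles alpha - J)) = card (doubles alpha) + card (singles alpha) - card J"
    using assms(1,2) by (simp_all add: card_Un_disjoint)
qed

lemma two_set_content_card:
  assumes "finite S" "finite T" and content: "\<forall>x. alpha x = of_bool (x \<in> S) + of_bool (x \<in> T)"
  shows "2 * card (doubles alpha) + card (singles alpha) = card S + card T"
proof -
  note DQ = two_set_content_doubles_singles[OF content]
  have "S \<union> T = doubles alpha \<union> singles alpha" unfolding DQ(2,3) by blast
  moreover have "card (doubles alpha \<union> singles alpha) = card (doubles alpha) + card (singles alpha)"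
    using assms(1,2) doubles_singles_disjoint unfolding DQ(2,3) by (intro card_Un_disjoint) auto
  ultimately show ?thesis using card_Un_Int[OF assms(1,2)] unfolding DQ(2) by simp
qed

definition content_pairs :: "nat \<Rightarrow> nat \<Rightarrow> (nat \<Rightarrow> nat) \<Rightarrow> (nat set \<times> nat set) set" where
  "content_pairs a b alpha = {(S, T). finite S \<and> finite T \<and> S \<subseteq> {1..} \<and> T \<subseteq> {1..}
      \<and> card S = a \<and> card T = b \<and> (\<forall>c. 1 \<le> c \<longrightarrow> of_bool (c \<in> S) + of_bool (c \<in> T) = alpha c)}"

lemma e_coeff_list_iff_content_pair:
  "(length Ss = length [a, b] \<and>
      (\<forall>k < length [a, b]. finite (Ss ! k) \<and> Ss ! k \<subseteq> {1..} \<and> card (Ss ! k) = [a, b] ! k) \<and>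
      (\<forall>c. 1 \<le> c \<longrightarrow> length (filter (\<lambda>S. c \<in> S) Ss) = alpha c))
    \<longleftrightarrow> (\<exists>S T. Ss = [S, T] \<and> (S, T) \<in> content_pairs a b alpha)"
proof
  assume "length Ss = length [a, b] \<and>
      (\<forall>k < length [a, b]. finite (Ss ! k) \<and> Ss ! k \<subseteq> {1..} \<and> card (Ss ! k) = [a, b] ! k) \<and>
      (\<forall>c. 1 \<le> c \<longrightarrow> length (filter (\<lambda>S. c \<in> S) Ss) = alpha c)"
  then have len: "length Ss = Suc (Suc 0)"
    and parts: "\<forall>k < 2. finite (Ss ! k) \<and> Ss ! k \<subseteq> {1..} \<and> card (Ss ! k) = [a, b] ! k"
    and content: "\<forall>c. 1 \<le> c \<longrightarrow> length (filter (\<lambda>S. c \<in> S) Ss) = alpha c"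
    by simp_all
  from len obtain S Ss' where "Ss = S # Ss'" "length Ss' = Suc 0" by (cases Ss) auto
  then obtain T where Ss_eq: "Ss = [S, T]" by (cases Ss') auto
  have "of_bool (c \<in> S) + of_bool (c \<in> T) = alpha c" if "1 \<le> c" for c
    using content[rule_format, OF that] unfolding Ss_eq by (cases "c \<in> S"; cases "c \<in> T") simp_all
  moreover have "finite S \<and> S \<subseteq> {1..} \<and> card S = a" "finite T \<and> T \<subseteq> {1..} \<and> card T = b"
    using parts[rule_format, of 0] parts[rule_format, of 1] unfolding Ss_eq by simp_all
  ultimately show "\<exists>S T. Ss = [S, T] \<and> (S, T) \<in> content_pairs a b alpha"
    unfolding content_pairs_def using Ss_eq by auto
next
  assume "\<exists>S T. Ss = [S, T] \<and> (S, T) \<in> content_pairs a b alpha"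
  then obtain S T where Ss_eq: "Ss = [S, T]" and ST: "(S, T) \<in> content_pairs a b alpha" by blast
  have "length (filter (\<lambda>U. c \<in> U) [S, T]) = alpha c" if "1 \<le> c" for c
    using ST that unfolding content_pairs_def by (cases "c \<in> S"; cases "c \<in> T") auto
  moreover have "\<forall>k < length [a, b]. finite ([S, T] ! k) \<and> [S, T] ! k \<subseteq> {1..} \<and> card ([S, T] ! k) = [a, b] ! k"
    using ST unfolding content_pairs_def by (simp add: less_Suc_eq)
  ultimately show "length Ss = length [a, b] \<and>
      (\<forall>k < length [a, b]. finite (Ss ! k) \<and> Ss ! k \<subseteq> {1..} \<and> card (Ss ! k) = [a, b] ! k) \<and>
      (\<forall>c. 1 \<le> c \<longrightarrow> length (filter (\<lambda>S. c \<in> S) Ss) = alpha c)"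
    unfolding Ss_eq by simp
qed

lemma e_coeff_eq_card_content_pairs: "e_coeff [a, b] alpha = card (content_pairs a b alpha)"
proof -
  have "e_coeff [a, b] alpha = card ((\<lambda>(S, T). [S, T]) ` content_pairs a b alpha)"
    unfolding e_coeff_def e_coeff_list_iff_content_pair by (rule arg_cong[where f = card]) auto
  also have "\<dots> = card (content_pairs a b alpha)"
    by (rule card_image) (auto simp: inj_on_def)
  finally show ?thesis .
qed

lemma content_positive_iff:
  fixes alpha :: "nat \<Rightarrow> nat"
  assumes "alpha 0 = 0" "S \<subseteq> {1..}" "T \<subseteq> {1..}"
  shows "(\<forall>c. 1 \<le> c \<longrightarrow> of_bool (c \<in> S) + of_bool (c \<in> T) = alpha c)
    \<longleftrightarrow> (\<forall>x. alpha x = of_bool (x \<in> S) + of_bool (x \<in> T))"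
proof
  assume content: "\<forall>c. 1 \<le> c \<longrightarrow> of_bool (c \<in> S) + of_bool (c \<in> T) = alpha c"
  have "0 \<notin> S" "0 \<notin> T" using assms(2,3) by auto
  show "\<forall>x. alpha x = of_bool (x \<in> S) + of_bool (x \<in> T)"
  proof
    fix x show "alpha x = of_bool (x \<in> S) + of_bool (x \<in> T)"
      using content[rule_format, of x] assms(1) \<open>0 \<notin> S\<close> \<open>0 \<notin> T\<close> by (cases x) auto
  qed
qed simp

lemma content_pairs_subset_splittings:
  assumes a0: "alpha 0 = 0" and ST: "(S, T) \<in> content_pairs a b alpha"
  shows "(\<forall>x. alpha x \<le> 2) \<and> 2 * card (doubles alpha) + card (singles alpha) = a + b
      \<and> card (doubles alpha) \<le> b"
    and "(S, T) \<in> (\<lambda>K. (doubles alpha \<union> (singles alpha - K), doubles alpha \<union> K))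
      ` {K. K \<subseteq> singles alpha \<and> card K = b - card (doubles alpha)}"
proof -
  have ST': "finite S" "finite T" "S \<subseteq> {1..}" "T \<subseteq> {1..}" "card S = a" "card T = b"
    and "\<forall>c. 1 \<le> c \<longrightarrow> of_bool (c \<in> S) + of_bool (c \<in> T) = alpha c"
    using ST unfolding content_pairs_def by auto
  then have content: "\<forall>x. alpha x = of_bool (x \<in> S) + of_bool (x \<in> T)"
    using content_positive_iff[where alpha = alpha, OF a0] by blast
  note DQ = two_set_content_doubles_singles[OF content]
  have "card (doubles alpha) \<le> b" unfolding DQ(2) using card_mono[OF ST'(2) Int_lower2] ST'(6) by simp
  then show "(\<forall>x. alpha x \<le> 2) \<and> 2 * card (doubles alpha) + card (singles alpha) = a + b
      \<and> card (doubles alpha) \<le> b"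
    using DQ(1) two_set_content_card[OF ST'(1,2) content] ST'(5,6) by simp
  have "T - S \<in> {K. K \<subseteq> singles alpha \<and> card K = b - card (doubles alpha)}"
    using ST'(1,2,6) unfolding DQ(2,3) by (auto simp: card_Diff_subset_Int Int_commute)
  moreover have "(S, T) = (doubles alpha \<union> (singles alpha - (T - S)), doubles alpha \<union> (T - S))"
    unfolding DQ(2,3) by auto
  ultimately show "(S, T) \<in> (\<lambda>K. (doubles alpha \<union> (singles alpha - K), doubles alpha \<union> K))
      ` {K. K \<subseteq> singles alpha \<and> card K = b - card (doubles alpha)}"
    by blast
qed

lemma splittings_subset_content_pairs:
  assumes fin: "finite {x. alpha x \<noteq> 0}" and a0: "alpha 0 = 0"
    and cond: "(\<forall>x. alpha x \<le> 2) \<and> 2 * card (doubles alpha) + card (singles alpha) = a + b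
      \<and> card (doubles alpha) \<le> b"
    and K: "K \<subseteq> singles alpha" "card K = b - card (doubles alpha)"
  shows "(doubles alpha \<union> (singles alpha - K), doubles alpha \<union> K) \<in> content_pairs a b alpha"
proof -
  let ?D = "doubles alpha" and ?Q = "singles alpha"
  have finDQ: "finite ?D" "finite ?Q" using finite_doubles_singles[OF fin] .
  have QK: "?Q - K \<subseteq> ?Q" "?Q - (?Q - K) = K" using K(1) by auto
  have content: "alpha x = of_bool (x \<in> ?D \<union> (?Q - K)) + of_bool (x \<in> ?D \<union> K)" for x
    using two_set_content_split[OF _ QK(1), of x] cond unfolding QK(2) by blast
  have pos: "?D \<union> ?Q \<subseteq> {1..}"
    using zero_notin_doubles_singles[where alpha = alpha, OF a0] by (auto simp: Suc_le_eq intro!: gr0I)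
  have "card (?D \<union> K) = b" "card (?D \<union> (?Q - K)) = a"
    using card_two_set_split[OF finDQ(2,1) K(1)] K(2) cond by linarith+
  then show ?thesis
    unfolding content_pairs_def using finDQ K(1) pos content by (auto intro: finite_subset)
qed

lemma e_coeff_two:
  assumes fin: "finite {x. alpha x \<noteq> 0}" and a0: "alpha 0 = 0"
  shows "e_coeff [a, b] alpha = (if (\<forall>x. alpha x \<le> 2) \<and> 2 * card (doubles alpha) + card (singles alpha) = a + b
      \<and> card (doubles alpha) \<le> b then card (singles alpha) choose (b - card (doubles alpha)) else 0)"
proof -
  let ?D = "doubles alpha" and ?Q = "singles alpha"
  let ?cond = "(\<forall>x. alpha x \<le> 2) \<and> 2 * card ?D + card ?Q = a + b \<and> card ?D \<le> b"
  let ?K = "{K. K \<subseteq> ?Q \<and> card K = b - card ?D}"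
  show ?thesis
  proof (cases ?cond)
    case True
    have inj: "inj_on (\<lambda>K. (?D \<union> (?Q - K), ?D \<union> K)) ?K"
    proof (rule inj_onI)
      fix K K' assume "K \<in> ?K" "K' \<in> ?K" "(?D \<union> (?Q - K), ?D \<union> K) = (?D \<union> (?Q - K'), ?D \<union> K')"
      then have "K \<subseteq> ?Q" "K' \<subseteq> ?Q" "?D \<union> K = ?D \<union> K'" by auto
      then show "K = K'" using doubles_singles_disjoint[of alpha] by blast
    qed
    have "content_pairs a b alpha = (\<lambda>K. (?D \<union> (?Q - K), ?D \<union> K)) ` ?K"
      using content_pairs_subset_splittings(2)[where alpha = alpha, OF a0] splittings_subset_content_pairs[where alpha = alpha, OF fin a0 True]
      by auto
    then have "card (content_pairs a b alpha) = card ?Q choose (b - card ?D)"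
      using card_image[OF inj] n_subsets[OF finite_doubles_singles(2)[OF fin]] by simp
    then show ?thesis unfolding e_coeff_eq_card_content_pairs by (simp only: if_P[OF True])
  next
    case False
    then have "content_pairs a b alpha = {}"
      using content_pairs_subset_splittings(1)[where alpha = alpha, OF a0] by auto
    then show ?thesis unfolding e_coeff_eq_card_content_pairs by (simp only: if_not_P[OF False] card.empty)
  qed
qed

definition glue :: "nat \<Rightarrow> (nat \<Rightarrow> nat) \<Rightarrow> nat \<Rightarrow> (nat \<Rightarrow> nat) \<Rightarrow> nat \<Rightarrow> nat" where
  "glue r f c g = (\<lambda>v. f v + g v + (if v = r then c else 0))"

text \<open>Colour profiles (U, c, V): the colours of {1..<r}, of r and of {r<..n}.\<close>
definition profiles :: "nat \<Rightarrow> nat \<Rightarrow> (nat \<Rightarrow> nat) \<Rightarrow> (nat set \<times> nat \<times> nat set) set" where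
  "profiles n r alpha = {(U, c, V). finite U \<and> finite V \<and> (\<forall>x\<in>U. 1 \<le> x) \<and> (\<forall>x\<in>V. 1 \<le> x)
     \<and> card U = r - 1 \<and> card V = n - r \<and> 1 \<le> c \<and> c \<notin> U \<and> c \<notin> V
     \<and> (\<forall>x. 1 \<le> x \<longrightarrow> of_bool (x \<in> U) + of_bool (x = c) + of_bool (x \<in> V) = alpha x)}"

lemma mem_profiles:
  "(U, c, V) \<in> profiles n r alpha \<longleftrightarrow> finite U \<and> finite V \<and> (\<forall>x\<in>U. 1 \<le> x) \<and> (\<forall>x\<in>V. 1 \<le> x)
     \<and> card U = r - 1 \<and> card V = n - r \<and> 1 \<le> c \<and> c \<notin> U \<and> c \<notin> V
     \<and> (\<forall>x. 1 \<le> x \<longrightarrow> of_bool (x \<in> U) + of_bool (x = c) + of_bool (x \<in> V) = alpha x)"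
  unfolding profiles_def by simp

definition profile_asc :: "nat set \<times> nat \<times> nat set \<Rightarrow> nat" where
  "profile_asc t = (case t of (U, c, V) \<Rightarrow> card {x\<in>U. x < c} + card {y\<in>V. c < y})"

lemma bij_betw_card_fiber: "bij_betw f A B \<Longrightarrow> card {i\<in>A. f i = x} = of_bool (x \<in> B)"
proof -
  assume b: "bij_betw f A B"
  have "card {i\<in>A. f i = x} = card {y\<in>B. y = x}" using bij_betw_card_filter[OF b, of "\<lambda>y. y = x"] by simp
  also have "\<dots> = of_bool (x \<in> B)"
  proof (cases "x \<in> B")
    case True
    then have "{y\<in>B. y = x} = {x}" by auto
    then show ?thesis using True by simp
  qed auto
  finally show ?thesis .
qed

locale two_cliques =
  fixes n r :: nat and m :: "nat \<Rightarrow> nat"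
  assumes r_pos: "1 \<le> r" and r_le: "r \<le> n - 1"
    and m_eq: "\<forall>i. 1 \<le> i \<and> i \<le> n - 1 \<longrightarrow> m i = (if i < r then r else n)"
begin

lemma r_less_n: "r < n" using r_pos r_le by simp

lemma nuio_edge_iff: "nuio_edge n m i j \<longleftrightarrow> (1 \<le> i \<and> i < j \<and> j \<le> r) \<or> (r \<le> i \<and> i < j \<and> j \<le> n)"
proof (cases "1 \<le> i \<and> i \<le> n - 1")
  case True
  then have "m i = (if i < r then r else n)" using m_eq by simp
  then show ?thesis unfolding nuio_edge_def using True r_less_n r_pos by auto
next
  case False
  then show ?thesis unfolding nuio_edge_def using r_less_n r_pos by auto
qed

lemma asc_eq_asc_between: "asc n m \<kappa> = asc_between \<kappa> 1 (Suc r) + asc_between \<kappa> r (Suc n)"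
proof -
  have e: "{(i, j). nuio_edge n m i j \<and> \<kappa> i < \<kappa> j} =
    {(i, j). 1 \<le> i \<and> i < j \<and> j < Suc r \<and> \<kappa> i < \<kappa> j} \<union> {(i, j). r \<le> i \<and> i < j \<and> j < Suc n \<and> \<kappa> i < \<kappa> j}"
    unfolding nuio_edge_iff by auto
  have f1: "finite {(i, j). 1 \<le> i \<and> i < j \<and> j < Suc r \<and> \<kappa> i < \<kappa> j}"
    by (rule finite_subset[of _ "{..<Suc r} \<times> {..<Suc r}"]) auto
  have f2: "finite {(i, j). r \<le> i \<and> i < j \<and> j < Suc n \<and> \<kappa> i < \<kappa> j}"
    by (rule finite_subset[of _ "{..<Suc n} \<times> {..<Suc n}"]) auto
  have d: "{(i, j). 1 \<le> i \<and> i < j \<and> j < Suc r \<and> \<kappa> i < \<kappa> j} \<inter> {(i, j). r \<le> i \<and> i < j \<and> j < Suc n \<and> \<kappa> i < \<kappa> j} = {}"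
    by auto
  show ?thesis unfolding asc_def e card_Un_disjoint[OF f1 f2 d] asc_between_def by simp
qed

lemma left_dom: "{1..<1 + (r - 1)} = {1..<r}" using r_pos by simp
lemma right_dom: "{Suc r..<Suc r + (n - r)} = {Suc r..n}" using r_less_n by auto
lemma vertices_split: "{1..n} = {1..<r} \<union> {r} \<union> {Suc r..n}" using r_pos r_less_n by auto

abbreviation left_arr where "left_arr U \<equiv> arrangements 1 (r - 1) U"
abbreviation right_arr where "right_arr V \<equiv> arrangements (Suc r) (n - r) V"

lemma left_arr_bij: "f \<in> left_arr U \<Longrightarrow> bij_betw f {1..<r} U"
  unfolding arrangements_def left_dom by simp
lemma left_arr_zero: "f \<in> left_arr U \<Longrightarrow> v \<notin> {1..<r} \<Longrightarrow> f v = 0"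
  unfolding arrangements_def left_dom by simp
lemma right_arr_bij: "g \<in> right_arr V \<Longrightarrow> bij_betw g {Suc r..n} V"
  unfolding arrangements_def right_dom by simp
lemma right_arr_zero: "g \<in> right_arr V \<Longrightarrow> v \<notin> {Suc r..n} \<Longrightarrow> g v = 0"
  unfolding arrangements_def right_dom by simp

lemma glue_left: "f \<in> left_arr U \<Longrightarrow> g \<in> right_arr V \<Longrightarrow> v \<in> {1..<r} \<Longrightarrow> glue r f c g v = f v"
  unfolding glue_def using right_arr_zero[of g V v] by auto
lemma glue_right: "f \<in> left_arr U \<Longrightarrow> g \<in> right_arr V \<Longrightarrow> v \<in> {Suc r..n} \<Longrightarrow> glue r f c g v = g v"
  unfolding glue_def using left_arr_zero[of f U v] by auto
lemma glue_shared: "f \<in> left_arr U \<Longrightarrow> g \<in> right_arr V \<Longrightarrow> glue r f c g r = c"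
  unfolding glue_def using left_arr_zero[of f U r] right_arr_zero[of g V r] by auto
lemma glue_outside: "f \<in> left_arr U \<Longrightarrow> g \<in> right_arr V \<Longrightarrow> v \<notin> {1..n} \<Longrightarrow> glue r f c g v = 0"
  unfolding glue_def using left_arr_zero[of f U v] right_arr_zero[of g V v] r_pos r_less_n by auto

lemma card_glue_fiber:
  assumes f: "f \<in> left_arr U" and g: "g \<in> right_arr V"
  shows "card {v\<in>{1..n}. glue r f c g v = x} = of_bool (x \<in> U) + of_bool (x = c) + of_bool (x \<in> V)"
proof -
  have e: "{v\<in>{1..n}. glue r f c g v = x} = {v\<in>{1..<r}. f v = x} \<union> {v\<in>{r}. c = x} \<union> {v\<in>{Suc r..n}. g v = x}"
    unfolding vertices_split using glue_left[OF f g] glue_right[OF f g] glue_shared[OF f g] by auto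
  have "card ({v\<in>{1..<r}. f v = x} \<union> {v\<in>{r}. c = x} \<union> {v\<in>{Suc r..n}. g v = x})
     = card {v\<in>{1..<r}. f v = x} + card {v\<in>{r}. c = x} + card {v\<in>{Suc r..n}. g v = x}"
    by (subst card_Un_disjoint; auto)+
  also have "\<dots> = of_bool (x \<in> U) + of_bool (x = c) + of_bool (x \<in> V)"
    using bij_betw_card_fiber[OF left_arr_bij[OF f]] bij_betw_card_fiber[OF right_arr_bij[OF g]] by auto
  finally show ?thesis unfolding e .
qed

lemma asc_glue:
  assumes f: "f \<in> left_arr U" and g: "g \<in> right_arr V"
  shows "asc n m (glue r f c g) = asc_between f 1 (1 + (r - 1)) + asc_between g (Suc r) (Suc r + (n - r)) + profile_asc (U, c, V)"
proof -
  let ?k = "glue r f c g"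
  have a1: "asc_between ?k 1 (Suc r) = asc_between f 1 (1 + (r - 1)) + card {x\<in>U. x < c}"
  proof -
    have "asc_between ?k 1 (Suc r) = asc_between ?k 1 r + card {i. 1 \<le> i \<and> i < r \<and> ?k i < ?k r}" by (rule asc_between_split_last)
    also have "asc_between ?k 1 r = asc_between f 1 (1 + (r - 1))"
    proof -
      have "1 + (r - 1) = r" using r_pos by simp
      then show ?thesis using glue_left[OF f g] by (simp only:) (intro asc_between_cong, auto)
    qed
    also have "{i. 1 \<le> i \<and> i < r \<and> ?k i < ?k r} = {i\<in>{1..<r}. f i < c}"
      using glue_left[OF f g] glue_shared[OF f g] by auto
    also have "card {i\<in>{1..<r}. f i < c} = card {x\<in>U. x < c}"
      by (rule bij_betw_card_filter[OF left_arr_bij[OF f]])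
    finally show ?thesis .
  qed
  have a2: "asc_between ?k r (Suc n) = card {y\<in>V. c < y} + asc_between g (Suc r) (Suc r + (n - r))"
  proof -
    have "asc_between ?k r (Suc n) = card {j. r < j \<and> j < Suc n \<and> ?k r < ?k j} + asc_between ?k (Suc r) (Suc n)"
      by (rule asc_between_split_first) (use r_less_n in simp)
    also have "asc_between ?k (Suc r) (Suc n) = asc_between g (Suc r) (Suc r + (n - r))"
    proof -
      have "Suc r + (n - r) = Suc n" using r_less_n by simp
      then show ?thesis using glue_right[OF f g] by (simp only:) (intro asc_between_cong, auto)
    qed
    also have "{j. r < j \<and> j < Suc n \<and> ?k r < ?k j} = {j\<in>{Suc r..n}. c < g j}"
      using glue_right[OF f g] glue_shared[OF f g] by auto
    also have "card {j\<in>{Suc r..n}. c < g j} = card {y\<in>V. c < y}"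
      by (rule bij_betw_card_filter[OF right_arr_bij[OF g]])
    finally show ?thesis .
  qed
  show ?thesis unfolding asc_eq_asc_between a1 a2 profile_asc_def by simp
qed

lemma proper_iff_inj_on_cliques:
  "(\<forall>i j. nuio_edge n m i j \<longrightarrow> \<kappa> i \<noteq> \<kappa> j) \<longleftrightarrow> inj_on \<kappa> {1..r} \<and> inj_on \<kappa> {r..n}"
proof
  assume "\<forall>i j. nuio_edge n m i j \<longrightarrow> \<kappa> i \<noteq> \<kappa> j"
  then show "inj_on \<kappa> {1..r} \<and> inj_on \<kappa> {r..n}"
    by (auto simp: nuio_edge_iff intro!: linorder_inj_onI')
next
  assume inj: "inj_on \<kappa> {1..r} \<and> inj_on \<kappa> {r..n}"
  show "\<forall>i j. nuio_edge n m i j \<longrightarrow> \<kappa> i \<noteq> \<kappa> j"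
  proof (intro allI impI)
    fix i j assume "nuio_edge n m i j"
    then have "i \<noteq> j" and "i \<in> {1..r} \<and> j \<in> {1..r} \<or> i \<in> {r..n} \<and> j \<in> {r..n}"
      unfolding nuio_edge_iff by auto
    then show "\<kappa> i \<noteq> \<kappa> j" using inj inj_on_contraD by metis
  qed
qed

lemma restrict_glue:
  assumes "f \<in> left_arr U" "g \<in> right_arr V"
  shows "(\<lambda>v. if v \<in> {1..<r} then glue r f c g v else 0) = f"
    and "(\<lambda>v. if v \<in> {Suc r..n} then glue r f c g v else 0) = g"
proof -
  show "(\<lambda>v. if v \<in> {1..<r} then glue r f c g v else 0) = f"
  proof
    fix v show "(if v \<in> {1..<r} then glue r f c g v else 0) = f v"
      using glue_left[OF assms, of v] left_arr_zero[OF assms(1), of v] by (cases "v \<in> {1..<r}") simp_all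
  qed
  show "(\<lambda>v. if v \<in> {Suc r..n} then glue r f c g v else 0) = g"
  proof
    fix v show "(if v \<in> {Suc r..n} then glue r f c g v else 0) = g v"
      using glue_right[OF assms, of v] right_arr_zero[OF assms(2), of v] by (cases "v \<in> {Suc r..n}") simp_all
  qed
qed

lemma inj_on_glue: "inj_on (\<lambda>(f, g). glue r f c g) (left_arr U \<times> right_arr V)"
proof (rule inj_onI, clarify)
  fix f g f' g'
  assume fg: "f \<in> left_arr U" "g \<in> right_arr V" and fg': "f' \<in> left_arr U" "g' \<in> right_arr V"
    and eq: "glue r f c g = glue r f' c g'"
  have "f = f'"
    using restrict_glue(1)[OF fg, of c] restrict_glue(1)[OF fg', of c] unfolding eq by (rule trans[OF sym])
  moreover have "g = g'"
    using restrict_glue(2)[OF fg, of c] restrict_glue(2)[OF fg', of c] unfolding eq by (rule trans[OF sym])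
  ultimately show "f = f' \<and> g = g'" ..
qed

definition profile_of :: "(nat \<Rightarrow> nat) \<Rightarrow> nat set \<times> nat \<times> nat set" where
  "profile_of \<kappa> = (\<kappa> ` {1..<r}, \<kappa> r, \<kappa> ` {Suc r..n})"

lemma glue_in_colorings:
  assumes t: "(U, c, V) \<in> profiles n r alpha" and f: "f \<in> left_arr U" and g: "g \<in> right_arr V"
  shows "glue r f c g \<in> colorings_of_type n m alpha" and "profile_of (glue r f c g) = (U, c, V)"
proof -
  let ?\<kappa> = "glue r f c g"
  have P: "\<forall>x\<in>U. 1 \<le> x" "\<forall>x\<in>V. 1 \<le> x" "1 \<le> c" "c \<notin> U" "c \<notin> V"
    "\<forall>x. 1 \<le> x \<longrightarrow> of_bool (x \<in> U) + of_bool (x = c) + of_bool (x \<in> V) = alpha x"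
    using t unfolding profiles_def by auto
  have bij_left: "bij_betw ?\<kappa> {1..<r} U"
    using left_arr_bij[OF f] by (rule bij_betw_cong[THEN iffD1, rotated]) (simp add: glue_left[OF f g])
  have bij_right: "bij_betw ?\<kappa> {Suc r..n} V"
    using right_arr_bij[OF g] by (rule bij_betw_cong[THEN iffD1, rotated]) (simp add: glue_right[OF f g])
  have "{1..r} = insert r {1..<r}" "{1..<r} - {r} = {1..<r}"
    and "{r..n} = insert r {Suc r..n}" "{Suc r..n} - {r} = {Suc r..n}"
    using r_pos r_less_n by auto
  then have "inj_on ?\<kappa> {1..r}" "inj_on ?\<kappa> {r..n}"
    using bij_left bij_right P(4,5) unfolding bij_betw_def by (simp_all add: glue_shared[OF f g])
  then have proper: "\<forall>i j. nuio_edge n m i j \<longrightarrow> ?\<kappa> i \<noteq> ?\<kappa> j"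
    using proper_iff_inj_on_cliques by blast
  have image: "?\<kappa> ` {1..n} = U \<union> {c} \<union> V"
    using bij_left bij_right unfolding vertices_split image_Un bij_betw_def by (simp add: glue_shared[OF f g])
  show "?\<kappa> \<in> colorings_of_type n m alpha"
    unfolding colorings_of_type_def mem_Collect_eq
  proof (intro conjI allI impI)
    show "1 \<le> ?\<kappa> v" if "v \<in> {1..n}" for v
    proof -
      have "?\<kappa> v \<in> U \<union> {c} \<union> V" using imageI[OF that, of ?\<kappa>] unfolding image .
      then show ?thesis using P(1-3) by auto
    qed
    show "?\<kappa> v = 0" if "v \<notin> {1..n}" for v
      using glue_outside[OF f g that] .
    show "card {v \<in> {1..n}. ?\<kappa> v = x} = alpha x" if "1 \<le> x" for x
      using card_glue_fiber[OF f g] P(6) that by simp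
  qed (use proper in blast)
  show "profile_of ?\<kappa> = (U, c, V)"
    using bij_left bij_right unfolding profile_of_def bij_betw_def by (simp add: glue_shared[OF f g])
qed

lemma coloring_decomp:
  assumes \<kappa>: "\<kappa> \<in> colorings_of_type n m alpha"
  defines "f \<equiv> \<lambda>v. if v \<in> {1..<r} then \<kappa> v else 0" and "g \<equiv> \<lambda>v. if v \<in> {Suc r..n} then \<kappa> v else 0"
  shows "f \<in> left_arr (\<kappa> ` {1..<r})" and "g \<in> right_arr (\<kappa> ` {Suc r..n})"
    and "\<kappa> = glue r f (\<kappa> r) g" and "profile_of \<kappa> \<in> profiles n r alpha"
proof -
  have K: "\<forall>v. v \<in> {1..n} \<longrightarrow> 1 \<le> \<kappa> v" "\<forall>v. v \<notin> {1..n} \<longrightarrow> \<kappa> v = 0"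
    "\<forall>i j. nuio_edge n m i j \<longrightarrow> \<kappa> i \<noteq> \<kappa> j" "\<forall>c. 1 \<le> c \<longrightarrow> card {v \<in> {1..n}. \<kappa> v = c} = alpha c"
    using \<kappa> unfolding colorings_of_type_def by auto
  have "inj_on \<kappa> {1..r}" "inj_on \<kappa> {r..n}"
    using K(3) proper_iff_inj_on_cliques by blast+
  moreover have "{1..r} = insert r {1..<r}" "{r..n} = insert r {Suc r..n}" using r_pos r_less_n by auto
  ultimately have inj_left: "inj_on \<kappa> {1..<r}" "\<kappa> r \<notin> \<kappa> ` {1..<r}"
    and inj_right: "inj_on \<kappa> {Suc r..n}" "\<kappa> r \<notin> \<kappa> ` {Suc r..n}"
    by auto
  show f_arr: "f \<in> left_arr (\<kappa> ` {1..<r})"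
    unfolding arrangements_def left_dom f_def using inj_left(1)
    by (auto simp: bij_betw_def inj_on_def)
  show g_arr: "g \<in> right_arr (\<kappa> ` {Suc r..n})"
    unfolding arrangements_def right_dom g_def using inj_right(1)
    by (auto simp: bij_betw_def inj_on_def)
  show glue_eq: "\<kappa> = glue r f (\<kappa> r) g"
  proof
    fix v show "\<kappa> v = glue r f (\<kappa> r) g v"
      unfolding glue_def f_def g_def using K(2) r_pos r_less_n by (cases "v \<in> {1..n}") auto
  qed
  have content: "\<forall>x. 1 \<le> x \<longrightarrow>
      of_bool (x \<in> \<kappa> ` {1..<r}) + of_bool (x = \<kappa> r) + of_bool (x \<in> \<kappa> ` {Suc r..n}) = alpha x"
    using card_glue_fiber[OF f_arr g_arr, of "\<kappa> r"] K(4) glue_eq by simp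
  have pos: "\<forall>x\<in>\<kappa> ` {1..<r}. 1 \<le> x" "\<forall>x\<in>\<kappa> ` {Suc r..n}. 1 \<le> x" "1 \<le> \<kappa> r"
    using K(1) r_pos r_less_n by auto
  have cards: "card (\<kappa> ` {1..<r}) = r - 1" "card (\<kappa> ` {Suc r..n}) = n - r"
    using inj_left(1) inj_right(1) by (simp_all add: card_image)
  show "profile_of \<kappa> \<in> profiles n r alpha"
    unfolding profile_of_def mem_profiles
    by (intro conjI; (rule content pos cards inj_left(2) inj_right(2) finite_imageI finite_atLeastLessThan
        finite_atLeastAtMost)+)
qed

lemma colorings_with_profile:
  assumes t: "(U, c, V) \<in> profiles n r alpha"
  shows "{\<kappa> \<in> colorings_of_type n m alpha. profile_of \<kappa> = (U, c, V)}
    = (\<lambda>(f, g). glue r f c g) ` (left_arr U \<times> right_arr V)"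
proof (intro equalityI subsetI)
  fix \<kappa> assume \<kappa>: "\<kappa> \<in> {\<kappa> \<in> colorings_of_type n m alpha. profile_of \<kappa> = (U, c, V)}"
  define f where "f = (\<lambda>v. if v \<in> {1..<r} then \<kappa> v else 0)"
  define g where "g = (\<lambda>v. if v \<in> {Suc r..n} then \<kappa> v else 0)"
  have "\<kappa> ` {1..<r} = U" "\<kappa> r = c" "\<kappa> ` {Suc r..n} = V"
    using \<kappa> unfolding profile_of_def by auto
  then have fg: "(f, g) \<in> left_arr U \<times> right_arr V" and \<kappa>_eq: "\<kappa> = glue r f c g"
    using coloring_decomp(1-3)[of \<kappa> alpha] \<kappa> unfolding f_def g_def by simp_all
  show "\<kappa> \<in> (\<lambda>(f, g). glue r f c g) ` (left_arr U \<times> right_arr V)"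
    using fg by (rule rev_image_eqI) (simp add: \<kappa>_eq)
next
  fix \<kappa> assume "\<kappa> \<in> (\<lambda>(f, g). glue r f c g) ` (left_arr U \<times> right_arr V)"
  then obtain p where p: "p \<in> left_arr U \<times> right_arr V" and "\<kappa> = glue r (fst p) c (snd p)"
    by (auto simp: case_prod_unfold)
  then show "\<kappa> \<in> {\<kappa> \<in> colorings_of_type n m alpha. profile_of \<kappa> = (U, c, V)}"
    using glue_in_colorings[OF t, of "fst p" "snd p"] by (simp add: mem_Times_iff)
qed

lemma finite_colorings:
  assumes fin: "finite {c. alpha c \<noteq> 0}"
  shows "finite (colorings_of_type n m alpha)"
proof (rule finite_subset)
  let ?S = "{c. alpha c \<noteq> 0}"
  show "finite {\<kappa>. \<forall>x. (x \<in> {1..n} \<longrightarrow> \<kappa> x \<in> ?S) \<and> (x \<notin> {1..n} \<longrightarrow> \<kappa> x = 0)}"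
    by (rule finite_set_of_finite_funs) (use fin in auto)
  have "\<kappa> x \<in> ?S" if \<kappa>: "\<kappa> \<in> colorings_of_type n m alpha" and x: "x \<in> {1..n}" for \<kappa> x
  proof -
    have "card {v \<in> {1..n}. \<kappa> v = \<kappa> x} \<noteq> 0" using x by (subst card_0_eq) auto
    moreover have "card {v \<in> {1..n}. \<kappa> v = \<kappa> x} = alpha (\<kappa> x)"
      using \<kappa> x unfolding colorings_of_type_def by auto
    ultimately show ?thesis by (simp only: mem_Collect_eq) metis
  qed
  then show "colorings_of_type n m alpha
      \<subseteq> {\<kappa>. \<forall>x. (x \<in> {1..n} \<longrightarrow> \<kappa> x \<in> ?S) \<and> (x \<notin> {1..n} \<longrightarrow> \<kappa> x = 0)}"
    unfolding colorings_of_type_def by blast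
qed

lemma finite_profiles:
  assumes fin: "finite {c. alpha c \<noteq> 0}"
  shows "finite (profiles n r alpha)"
proof (rule finite_subset)
  let ?S = "{c. alpha c \<noteq> 0}"
  show "profiles n r alpha \<subseteq> Pow ?S \<times> ?S \<times> Pow ?S"
  proof
    fix t assume "t \<in> profiles n r alpha"
    then obtain U c V where t: "t = (U, c, V)" and pos: "\<forall>x\<in>U. 1 \<le> x" "\<forall>x\<in>V. 1 \<le> x" "1 \<le> c"
      and content: "\<forall>x. 1 \<le> x \<longrightarrow> of_bool (x \<in> U) + of_bool (x = c) + of_bool (x \<in> V) = alpha x"
      unfolding profiles_def by blast
    have "alpha x \<noteq> 0" if "x \<in> insert c (U \<union> V)" for x
      using that pos content[rule_format, of x] by auto
    then show "t \<in> Pow ?S \<times> ?S \<times> Pow ?S" using t by auto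
  qed
  show "finite (Pow ?S \<times> ?S \<times> Pow ?S)" using fin by simp
qed

lemma sum_colorings_with_profile:
  assumes t: "(U, c, V) \<in> profiles n r alpha"
  shows "(\<Sum>\<kappa>\<in>{\<kappa> \<in> colorings_of_type n m alpha. profile_of \<kappa> = (U, c, V)}. monom 1 (asc n m \<kappa>))
    = qfact (r - 1) * qfact (n - r) * monom 1 (profile_asc (U, c, V))"
proof -
  have cards: "finite U" "card U = r - 1" "finite V" "card V = n - r"
    using t unfolding profiles_def by auto
  have "(\<Sum>\<kappa>\<in>{\<kappa> \<in> colorings_of_type n m alpha. profile_of \<kappa> = (U, c, V)}. monom 1 (asc n m \<kappa>))
      = (\<Sum>(f, g)\<in>left_arr U \<times> right_arr V. monom 1 (asc n m (glue r f c g)))"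
    unfolding colorings_with_profile[OF t]
    by (subst sum.reindex[OF inj_on_glue]) (simp add: case_prod_unfold)
  also have "\<dots> = (\<Sum>f\<in>left_arr U. \<Sum>g\<in>right_arr V. monom 1 (asc_between f 1 (1 + (r - 1)))
      * monom 1 (asc_between g (Suc r) (Suc r + (n - r))) * (monom 1 (profile_asc (U, c, V)) :: int poly))"
    by (auto simp: sum.cartesian_product asc_glue mult_monom intro!: sum.cong)
  also have "\<dots> = (\<Sum>f\<in>left_arr U. monom 1 (asc_between f 1 (1 + (r - 1))))
      * (\<Sum>g\<in>right_arr V. monom 1 (asc_between g (Suc r) (Suc r + (n - r))))
      * monom 1 (profile_asc (U, c, V))"
    by (subst sum_product) (simp only: sum_distrib_right)
  also have "\<dots> = qfact (r - 1) * qfact (n - r) * monom 1 (profile_asc (U, c, V))"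
    using sum_arrangements_asc[OF cards(1,2), of 1] sum_arrangements_asc[OF cards(3,4), of "Suc r"] by simp
  finally show ?thesis .
qed

lemma csf_coeff_eq_profile_sum:
  assumes fin: "finite {c. alpha c \<noteq> 0}"
  shows "csf_coeff n m alpha
    = qfact (r - 1) * qfact (n - r) * (\<Sum>t\<in>profiles n r alpha. monom 1 (profile_asc t))"
proof -
  have "profile_of ` colorings_of_type n m alpha \<subseteq> profiles n r alpha"
    using coloring_decomp(4) by blast
  then have "csf_coeff n m alpha = (\<Sum>t\<in>profiles n r alpha.
      \<Sum>\<kappa>\<in>{\<kappa> \<in> colorings_of_type n m alpha. profile_of \<kappa> = t}. monom 1 (asc n m \<kappa>))"
    unfolding csf_coeff_def
    by (rule sum.group[symmetric, OF finite_colorings[OF fin] finite_profiles[OF fin]])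
  also have "\<dots> = (\<Sum>t\<in>profiles n r alpha. qfact (r - 1) * qfact (n - r) * monom 1 (profile_asc t))"
    by (intro sum.cong refl) (clarsimp simp: sum_colorings_with_profile)
  finally show ?thesis by (simp add: sum_distrib_left)
qed

end

lemma card_filter_Un_disjoint:
  assumes "finite A" "finite B" "A \<inter> B = {}"
  shows "card {x \<in> A \<union> B. P x} = card {x \<in> A. P x} + card {x \<in> B. P x}"
proof -
  have "{x \<in> A \<union> B. P x} = {x \<in> A. P x} \<union> {x \<in> B. P x}" by auto
  then show ?thesis using assms by (simp add: card_Un_disjoint disjoint_iff)
qed

lemma card_less_plus_card_greater:
  fixes D :: "'a::linorder set"
  assumes "finite D" "c \<notin> D"
  shows "card {x \<in> D. x < c} + card {y \<in> D. c < y} = card D"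
proof -
  have "D = {x \<in> D. x < c} \<union> {y \<in> D. c < y}" using assms(2) by (auto simp: not_less le_less)
  also have "card \<dots> = card {x \<in> D. x < c} + card {y \<in> D. c < y}"
    using assms(1) by (intro card_Un_disjoint) auto
  finally show ?thesis by simp
qed

definition marked_profile :: "(nat \<Rightarrow> nat) \<Rightarrow> nat \<times> nat set \<Rightarrow> nat set \<times> nat \<times> nat set" where
  "marked_profile alpha = (\<lambda>(c, A). (doubles alpha \<union> A, c, doubles alpha \<union> (singles alpha - {c} - A)))"

lemma profile_asc_marked_profile:
  assumes fin: "finite (doubles alpha)" "finite (singles alpha)"
    and c: "c \<in> singles alpha" and A: "A \<subseteq> singles alpha - {c}"
  shows "profile_asc (marked_profile alpha (c, A)) = card (doubles alpha) + marked_stat (singles alpha) c A"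
proof -
  let ?D = "doubles alpha" and ?Q = "singles alpha"
  have disj: "?D \<inter> A = {}" "?D \<inter> (?Q - {c} - A) = {}" "c \<notin> ?D"
    using A c doubles_singles_disjoint by blast+
  have "finite A" using fin(2) A finite_subset by blast
  have "card {x \<in> ?D \<union> A. x < c} = card {x \<in> ?D. x < c} + card {x \<in> A. x < c}"
    by (rule card_filter_Un_disjoint) (use fin \<open>finite A\<close> disj in auto)
  moreover have "card {y \<in> ?D \<union> (?Q - {c} - A). c < y} = card {y \<in> ?D. c < y} + card {y \<in> ?Q - {c} - A. c < y}"
    by (rule card_filter_Un_disjoint) (use fin disj in auto)
  moreover note card_less_plus_card_greater[OF fin(1) disj(3)]
  ultimately show ?thesis
    unfolding marked_profile_def profile_asc_def marked_stat_def by simp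
qed

context two_cliques
begin

definition admissible :: "(nat \<Rightarrow> nat) \<Rightarrow> bool" where
  "admissible alpha \<longleftrightarrow> (\<forall>x. alpha x \<le> 2) \<and> 2 * card (doubles alpha) + card (singles alpha) = n
     \<and> card (doubles alpha) \<le> r - 1 \<and> card (doubles alpha) \<le> n - r"

definition marked_subsets :: "(nat \<Rightarrow> nat) \<Rightarrow> (nat \<times> nat set) set" where
  "marked_subsets alpha = (SIGMA c:singles alpha.
     {A. A \<subseteq> singles alpha - {c} \<and> card A = r - 1 - card (doubles alpha)})"

lemma profile_content:
  assumes "alpha 0 = 0" "(U, c, V) \<in> profiles n r alpha"
  shows "alpha x = of_bool (x \<in> insert c U) + of_bool (x \<in> V)"
proof -
  have P: "\<forall>x\<in>U. 1 \<le> x" "\<forall>x\<in>V. 1 \<le> x" "1 \<le> c" "c \<notin> U"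
    "\<forall>x. 1 \<le> x \<longrightarrow> of_bool (x \<in> U) + of_bool (x = c) + of_bool (x \<in> V) = alpha x"
    using assms(2) unfolding mem_profiles by simp_all
  show ?thesis
  proof (cases "x = 0")
    case True
    then show ?thesis using assms(1) P(1-3) by auto
  next
    case False
    then have "1 \<le> x" by simp
    then show ?thesis using P(4) by (simp add: P(5)[rule_format, of x, symmetric] of_bool_def)
  qed
qed

lemma profile_eq_marked_profile:
  assumes a0: "alpha 0 = 0" and t: "(U, c, V) \<in> profiles n r alpha"
  shows "admissible alpha" and "(U, c, V) \<in> marked_profile alpha ` marked_subsets alpha"
proof -
  let ?D = "doubles alpha" and ?Q = "singles alpha"
  have P: "finite U" "finite V" "card U = r - 1" "card V = n - r" "c \<notin> U" "c \<notin> V"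
    using t unfolding mem_profiles by simp_all
  have content: "\<forall>x. alpha x = of_bool (x \<in> insert c U) + of_bool (x \<in> V)"
    using profile_content[OF a0 t] by blast
  note DQ = two_set_content_doubles_singles[OF content]
  have D: "?D = U \<inter> V" and Q: "?Q = insert c (U - V) \<union> (V - U)"
    using DQ(2,3) P(5,6) by auto
  have "card (insert c U) = r" using P(1,3,5) r_pos by simp
  then have sizes: "2 * card ?D + card ?Q = n"
    using two_set_content_card[OF _ P(2) content] P(1,4) r_less_n by simp
  have "card ?D \<le> r - 1" "card ?D \<le> n - r"
    unfolding D using card_mono[OF P(1) Int_lower1] card_mono[OF P(2) Int_lower2] P(3,4) by simp_all
  then show "admissible alpha" unfolding admissible_def using DQ(1) sizes by simp
  have "c \<in> ?Q" "U - V \<subseteq> ?Q - {c}" "card (U - V) = r - 1 - card ?D"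
    unfolding Q D using P by (auto simp: card_Diff_subset_Int Int_commute)
  moreover have "(U, c, V) = marked_profile alpha (c, U - V)"
    unfolding marked_profile_def D Q using P(5,6) by auto
  ultimately show "(U, c, V) \<in> marked_profile alpha ` marked_subsets alpha"
    unfolding marked_subsets_def by (intro rev_image_eqI[of "(c, U - V)"]) auto
qed

lemma marked_profile_in_profiles:
  assumes fin: "finite {x. alpha x \<noteq> 0}" and a0: "alpha 0 = 0"
    and adm: "admissible alpha" and p: "p \<in> marked_subsets alpha"
  shows "marked_profile alpha p \<in> profiles n r alpha"
proof -
  obtain c A where p_eq: "p = (c, A)" by (cases p)
  let ?D = "doubles alpha" and ?Q = "singles alpha"
  have finDQ: "finite ?D" "finite ?Q" using finite_doubles_singles[OF fin] .
  have c: "c \<in> ?Q" and A: "A \<subseteq> ?Q - {c}" "card A = r - 1 - card ?D"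
    using p unfolding p_eq marked_subsets_def by auto
  have le2: "\<forall>x. alpha x \<le> 2" and sizes: "2 * card ?D + card ?Q = n"
    and D_le: "card ?D \<le> r - 1" "card ?D \<le> n - r"
    using adm unfolding admissible_def by simp_all
  have finA: "finite A" using A(1) finDQ(2) finite_subset by blast
  have "c \<notin> A" using A(1) by blast
  then have J: "insert c A \<subseteq> ?Q" "card (insert c A) = Suc (card A)" using c A(1) finA by auto
  have disj: "c \<notin> ?D" "?D \<inter> ?Q = {}" using c doubles_singles_disjoint by blast+
  have "A \<subseteq> ?Q" using A(1) by blast
  then have "card (?D \<union> A) = card ?D + card A" by (rule card_two_set_split(1)[OF finDQ(2,1)])
  then have card_U: "card (?D \<union> A) = r - 1" using A(2) D_le(1) by linarith
  have "?Q - insert c A = ?Q - {c} - A" by blast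
  then have "card (?D \<union> (?Q - {c} - A)) = card ?D + card ?Q - Suc (card A)"
    using card_two_set_split(2)[OF finDQ(2,1) J(1)] J(2) by simp
  then have card_V: "card (?D \<union> (?Q - {c} - A)) = n - r"
    using A(2) sizes D_le r_less_n r_pos by arith
  have pos: "1 \<le> x" if "x \<in> ?D \<union> ?Q" for x
    using that zero_notin_doubles_singles[where alpha = alpha, OF a0] by (cases x) auto
  have content: "alpha x = of_bool (x \<in> ?D \<union> A) + of_bool (x = c) + of_bool (x \<in> ?D \<union> (?Q - {c} - A))"
    for x
  proof -
    have "?Q - insert c A = ?Q - {c} - A" by blast
    moreover have "of_bool (x \<in> ?D \<union> insert c A) = of_bool (x \<in> ?D \<union> A) + (of_bool (x = c) :: nat)"
      using disj(1) \<open>c \<notin> A\<close> by (cases "x = c") simp_all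
    ultimately show ?thesis using two_set_content_split[OF le2 J(1), of x] by simp
  qed
  show ?thesis
    unfolding p_eq marked_profile_def mem_profiles prod.case
  proof (intro conjI allI impI ballI)
    show "finite (?D \<union> A)" "finite (?D \<union> (?Q - {c} - A))" using finDQ finA by simp_all
    show "1 \<le> x" if "x \<in> ?D \<union> A" for x using that A(1) pos by blast
    show "1 \<le> x" if "x \<in> ?D \<union> (?Q - {c} - A)" for x using that pos by blast
    show "1 \<le> c" using c pos by blast
    show "c \<notin> ?D \<union> A" "c \<notin> ?D \<union> (?Q - {c} - A)" using disj(1) \<open>c \<notin> A\<close> by simp_all
    show "of_bool (x \<in> ?D \<union> A) + of_bool (x = c) + of_bool (x \<in> ?D \<union> (?Q - {c} - A)) = alpha x" for x
      using content[of x] by simp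
  qed (fact card_U card_V)+
qed

lemma inj_on_marked_profile: "inj_on (marked_profile alpha) (marked_subsets alpha)"
proof (rule inj_onI, clarify)
  fix c A c' A'
  assume "(c, A) \<in> marked_subsets alpha" "(c', A') \<in> marked_subsets alpha"
    and eq: "marked_profile alpha (c, A) = marked_profile alpha (c', A')"
  then have "A \<subseteq> singles alpha" "A' \<subseteq> singles alpha"
    and "doubles alpha \<union> A = doubles alpha \<union> A'" "c = c'"
    unfolding marked_subsets_def marked_profile_def by auto
  then show "c = c' \<and> A = A'" using doubles_singles_disjoint by blast
qed

lemma sum_profiles:
  assumes fin: "finite {x. alpha x \<noteq> 0}" and a0: "alpha 0 = 0"
  shows "(\<Sum>t\<in>profiles n r alpha. monom 1 (profile_asc t)) = (if admissible alpha
    then monom 1 (card (doubles alpha)) * marked_gf (singles alpha) (r - 1 - card (doubles alpha)) else 0)"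
proof (cases "admissible alpha")
  case False
  then have "profiles n r alpha = {}"
    using profile_eq_marked_profile(1)[where alpha = alpha, OF a0] by fast
  then show ?thesis using False by simp
next
  case True
  let ?D = "doubles alpha" and ?Q = "singles alpha"
  have finDQ: "finite ?D" "finite ?Q" using finite_doubles_singles[OF fin] .
  have "profiles n r alpha = marked_profile alpha ` marked_subsets alpha"
  proof
    show "profiles n r alpha \<subseteq> marked_profile alpha ` marked_subsets alpha"
    proof
      fix t assume "t \<in> profiles n r alpha"
      moreover obtain U c V where "t = (U, c, V)" by (cases t)
      ultimately show "t \<in> marked_profile alpha ` marked_subsets alpha"
        using profile_eq_marked_profile(2)[where alpha = alpha, OF a0] by simp
    qed
    show "marked_profile alpha ` marked_subsets alpha \<subseteq> profiles n r alpha"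
      using marked_profile_in_profiles[OF fin a0 True] by (rule image_subsetI)
  qed
  then have "(\<Sum>t\<in>profiles n r alpha. monom 1 (profile_asc t))
      = (\<Sum>p\<in>marked_subsets alpha. monom 1 (profile_asc (marked_profile alpha p)))"
    using sum.reindex[OF inj_on_marked_profile] by (simp only: comp_def)
  also have "\<dots> = (\<Sum>(c, A)\<in>marked_subsets alpha. monom 1 (card ?D) * (monom 1 (marked_stat ?Q c A) :: int poly))"
  proof (rule sum.cong[OF refl])
    fix p assume p: "p \<in> marked_subsets alpha"
    obtain c A where p_eq: "p = (c, A)" by (cases p)
    have "c \<in> ?Q" "A \<subseteq> ?Q - {c}" using p unfolding p_eq marked_subsets_def by auto
    then show "monom 1 (profile_asc (marked_profile alpha p))
        = (case p of (c, A) \<Rightarrow> monom 1 (card ?D) * (monom 1 (marked_stat ?Q c A) :: int poly))"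
      unfolding p_eq by (simp add: profile_asc_marked_profile[OF finDQ] mult_monom)
  qed
  also have "\<dots> = monom 1 (card ?D) * marked_gf ?Q (r - 1 - card ?D)"
  proof -
    have "\<forall>c\<in>?Q. finite {A. A \<subseteq> ?Q - {c} \<and> card A = r - 1 - card ?D}"
      using finDQ(2) by simp
    then show ?thesis
      unfolding marked_subsets_def marked_gf_def
      by (simp only: sum.Sigma[OF finDQ(2), symmetric] sum_distrib_left split_conv)
  qed
  finally have "(\<Sum>t\<in>profiles n r alpha. monom 1 (profile_asc t))
      = monom 1 (card ?D) * marked_gf ?Q (r - 1 - card ?D)" .
  with True show ?thesis by simp
qed

lemma rhs_eq_admissible:
  assumes fin: "finite {c. alpha c \<noteq> 0}" and a0: "alpha 0 = 0"
  shows "(\<Sum>l = 0..min (n - r) (r - 1). monom 1 l * qfact (n - r) * qfact (r - 1) * qint (n - 2 * l)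
          * of_nat (e_coeff [n - l, l] alpha))
    = qfact (r - 1) * qfact (n - r) * (if admissible alpha
        then monom 1 (card (doubles alpha)) * marked_poly (card (singles alpha)) (r - 1 - card (doubles alpha))
        else 0)"
proof -
  let ?M = "min (n - r) (r - 1)" and ?p = "card (doubles alpha)" and ?q = "card (singles alpha)"
  let ?f = "\<lambda>l. monom 1 l * qfact (n - r) * qfact (r - 1) * qint (n - 2 * l) * of_nat (e_coeff [n - l, l] alpha)"
  have e_coeff: "e_coeff [n - l, l] alpha = (if (\<forall>x. alpha x \<le> 2) \<and> 2 * ?p + ?q = n \<and> ?p \<le> l
      then ?q choose (l - ?p) else 0)" if "l \<le> ?M" for l
    using e_coeff_two[OF fin a0, of "n - l" l] that r_less_n by simp
  show ?thesis
  proof (cases "admissible alpha")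
    case False
    have "?f l = 0" if "l \<in> {0..?M}" for l
      using e_coeff[of l] that False unfolding admissible_def by auto
    then have "(\<Sum>l = 0..?M. ?f l) = 0" by (rule sum.neutral[rule_format])
    then show ?thesis using False by simp
  next
    case True
    then have adm: "\<forall>x. alpha x \<le> 2" "2 * ?p + ?q = n" "?p \<le> r - 1" "?p \<le> n - r"
      unfolding admissible_def by auto
    have "(\<Sum>l = 0..?M. ?f l) = (\<Sum>l = ?p..?M. ?f l)"
      using e_coeff adm by (intro sum.mono_neutral_right) auto
    also have "\<dots> = (\<Sum>j = 0..?M - ?p. ?f (j + ?p))"
      using sum.shift_bounds_cl_nat_ivl[of ?f 0 ?p "?M - ?p"] adm by simp
    also have "\<dots> = qfact (r - 1) * qfact (n - r) * monom 1 ?p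
        * (\<Sum>j = 0..?M - ?p. monom 1 j * qint (?q - 2 * j) * of_nat (?q choose j))"
      unfolding sum_distrib_left
    proof (rule sum.cong[OF refl])
      fix j assume "j \<in> {0..?M - ?p}"
      then have "j + ?p \<le> ?M" using adm by auto
      then have "e_coeff [n - (j + ?p), j + ?p] alpha = ?q choose j" "n - 2 * (j + ?p) = ?q - 2 * j"
        using e_coeff[of "j + ?p"] adm by simp_all
      then show "?f (j + ?p) = qfact (r - 1) * qfact (n - r) * monom 1 ?p
          * (monom 1 j * qint (?q - 2 * j) * of_nat (?q choose j))"
        by (simp add: mult_monom algebra_simps)
    qed
    also have "(\<Sum>j = 0..?M - ?p. monom 1 j * qint (?q - 2 * j) * of_nat (?q choose j))
        = marked_poly ?q (r - 1 - ?p)"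
    proof -
      have "r - 1 - ?p < ?q" "min (r - 1 - ?p) (?q - 1 - (r - 1 - ?p)) = ?M - ?p"
        using adm r_less_n r_pos by auto
      then show ?thesis
        unfolding marked_poly_def qbinom_partial_def by (simp add: lessThan_Suc_atMost atLeast0AtMost)
    qed
    finally show ?thesis using True by (simp add: algebra_simps)
  qed
qed

end

theorem corollary4p4:
  fixes n r :: nat and m :: "nat \<Rightarrow> nat"
  assumes "1 \<le> r" and "r \<le> n - 1"
    and "\<forall>i. 1 \<le> i \<and> i \<le> n - 1 \<longrightarrow> m i = (if i < r then r else n)"
  shows "\<forall>alpha :: nat \<Rightarrow> nat. finite {c. alpha c \<noteq> 0} \<and> alpha 0 = 0 \<longrightarrow>
    csf_coeff n m alpha =
      (\<Sum>l = 0..min (n - r) (r - 1).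
          monom 1 l * qfact (n - r) * qfact (r - 1) * qint (n - 2 * l)
          * of_nat (e_coeff [n - l, l] alpha))"
proof (intro allI impI)
  fix alpha :: "nat \<Rightarrow> nat"
  assume alpha: "finite {c. alpha c \<noteq> 0} \<and> alpha 0 = 0"
  then have fin: "finite {c. alpha c \<noteq> 0}" and a0: "alpha 0 = 0" by simp_all
  interpret two_cliques n r m using assms by unfold_locales
  show "csf_coeff n m alpha =
      (\<Sum>l = 0..min (n - r) (r - 1).
          monom 1 l * qfact (n - r) * qfact (r - 1) * qint (n - 2 * l)
          * of_nat (e_coeff [n - l, l] alpha))"
    unfolding csf_coeff_eq_profile_sum[OF fin] sum_profiles[OF fin a0] rhs_eq_admissible[OF fin a0]
      marked_gf_eq_marked_poly[OF finite_doubles_singles(2)[OF fin]] ..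
qed

end
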